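(* Let $P_X$ be a distribution on $\mathbb{B}^d:=\{x\in\mathbb{R}^d:\|x\|_2\le1\}$ such that there exist $c_0>0$ and a closed Euclidean ball $A\subseteq\mathbb{B}^d$ of radius $\tau>0$ with $P_X(A_0)\ge c_0\mathrm{Vol}_d(A_0)$ for all measurable $A_0\subseteq A$. Let $p\in[d]$, $U\in\mathbb{R}^{d\times p}$ with $U^\top U=I_p$, $X\sim P_X$, and let $Q$ denote the distribution of $(U^\top X+\mathbf{1}_p)/2$. Then there exist $c_0'\equiv c_0'(c_0,\tau,d,p)>0$ and a hypercube $A'\subseteq[0,1]^p$ of side length $\frac{\tau}{2\sqrt p}$ such that $Q(A_0')\ge c_0'\mathrm{Vol}_p(A_0')$ for all measurable $A_0'\subseteq A'$.
   Context: $\mathrm{Vol}_k$ denotes $k$-dimensional Lebesgue measure; $\mathbf{1}_p$ is the all-ones vector in $\mathbb{R}^p$. *)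

theory Defs
  imports "HOL-Probability.Probability"
begin

definition ones :: "real ^ 'p" where "ones = (\<chi> i. 1)"

end

theory Submission
  imports Defs
begin

text \<open>
  Put \<open>u = U\<^sup>T z\<close>. Since \<open>U\<^sup>T\<close> is a contraction, \<open>|u\<^sub>i| \<le> \<parallel>z\<parallel> \<le> 1 - \<tau>\<close>, so the cube of side
  \<open>s = \<tau> / (2 \<surd>p)\<close> centred at \<open>(u + 1)/2\<close> lies in \<open>[0,1]\<^sup>p\<close>, and its preimage \<open>B\<close> under
  \<open>b \<mapsto> (b + 1)/2\<close> is a cube of side \<open>2s\<close> around \<open>u\<close>, hence inside the ball of radius \<open>\<tau>/2\<close>.
  The slab \<open>S = B(z, \<tau>) \<inter> (U\<^sup>T)\<^sup>-\<^sup>1 B\<close> has volume at least \<open>Vol\<^sub>d(B\<^sub>\<tau>\<^sub>/\<^sub>2) Vol\<^sub>p(B) / Vol\<^sub>p(B\<^sub>\<tau>\<^sub>/\<^sub>2)\<close>: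
  the map \<open>(x, y) \<mapsto> (x - U U\<^sup>T x + z + U (y - u), - U\<^sup>T x)\<close> on \<open>\<real>\<^sup>d \<times> \<real>\<^sup>p\<close> is a composition
  of three shears, hence preserves volume, and by Pythagoras it sends \<open>B\<^sub>\<tau>\<^sub>/\<^sub>2 \<times> B\<close> into
  \<open>S \<times> B\<^sub>\<tau>\<^sub>/\<^sub>2\<close>. As \<open>S\<close> lies in the preimage of \<open>A\<close> under \<open>x \<mapsto> (U\<^sup>T x + 1)/2\<close>, we get
  \<open>Q(A) \<ge> P\<^sub>X(S) \<ge> c\<^sub>0 Vol\<^sub>d(S)\<close>, and the rescaling by \<open>1/2\<close> costs a factor \<open>2\<^sup>p\<close>.
\<close>

lemma emeasure_lborel_Times:
  fixes A :: "'a::euclidean_space set" and B :: "'b::euclidean_space set"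
  assumes "A \<in> sets borel" "B \<in> sets borel"
  shows "emeasure lborel (A \<times> B) = emeasure lborel A * emeasure lborel B"
  using lborel.emeasure_pair_measure_Times[where N=lborel] assms by (simp add: lborel_prod)

lemma emeasure_lborel_translation_vimage:
  fixes c :: "'a::euclidean_space"
  assumes "A \<in> sets borel"
  shows "emeasure lborel ((\<lambda>x. x + c) -` A) = emeasure lborel A"
proof -
  have "(\<lambda>x. x + c) = (+) c"
    by (auto simp: add.commute)
  then show ?thesis
    using emeasure_distr[of "(+) c" lborel borel A] assms by (simp add: lborel_distr_plus)
qed

lemma
  fixes f :: "'b::euclidean_space \<Rightarrow> 'a::euclidean_space"
  assumes f: "f \<in> borel_measurable borel" and X: "X \<in> sets borel"
  shows sets_shear_fst: "(\<lambda>(x, y). (x + f y, y)) -` X \<in> sets borel"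
    and emeasure_lborel_shear_fst:
      "emeasure lborel ((\<lambda>(x, y). (x + f y, y)) -` X) = emeasure (lborel :: ('a \<times> 'b) measure) X"
proof -
  let ?T = "\<lambda>(x, y). (x + f y, y)"
  have "?T \<in> borel \<Otimes>\<^sub>M borel \<rightarrow>\<^sub>M borel \<Otimes>\<^sub>M borel"
    using f by measurable
  from measurable_sets[OF this[unfolded borel_prod] X]
  show sets: "?T -` X \<in> sets borel"
    by simp
  have sets_pair: "sets (lborel \<Otimes>\<^sub>M lborel) = sets (borel :: ('a \<times> 'b) measure)"
    by (simp only: lborel_prod sets_lborel)
  have slice: "(\<lambda>x. (x, y)) -` X \<in> sets borel" for y
    using measurable_sets[OF _ X, of "\<lambda>x. (x, y)" borel] by simp
  have slice_shift: "(\<lambda>x. (x, y)) -` (?T -` X) = (\<lambda>x. x + f y) -` ((\<lambda>x. (x, y)) -` X)" for y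
    by auto
  have "emeasure (lborel \<Otimes>\<^sub>M lborel) (?T -` X)
      = (\<integral>\<^sup>+y. emeasure lborel ((\<lambda>x. (x, y)) -` (?T -` X)) \<partial>lborel)"
    using sets by (intro lborel_pair.emeasure_pair_measure_alt2) (simp only: sets_pair)
  also have "\<dots> = (\<integral>\<^sup>+y. emeasure lborel ((\<lambda>x. (x, y)) -` X) \<partial>lborel)"
    by (simp only: slice_shift emeasure_lborel_translation_vimage[OF slice])
  also have "\<dots> = emeasure (lborel \<Otimes>\<^sub>M lborel) X"
    using X by (intro lborel_pair.emeasure_pair_measure_alt2[symmetric]) (simp only: sets_pair)
  finally show "emeasure lborel (?T -` X) = emeasure lborel X"
    by (simp only: lborel_prod)
qed

lemma
  fixes g :: "'a::euclidean_space \<Rightarrow> 'b::euclidean_space"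
  assumes g: "g \<in> borel_measurable borel" and X: "X \<in> sets borel"
  shows sets_shear_snd: "(\<lambda>(x, y). (x, y + g x)) -` X \<in> sets borel"
    and emeasure_lborel_shear_snd:
      "emeasure lborel ((\<lambda>(x, y). (x, y + g x)) -` X) = emeasure (lborel :: ('a \<times> 'b) measure) X"
proof -
  let ?T = "\<lambda>(x, y). (x, y + g x)"
  have "?T \<in> borel \<Otimes>\<^sub>M borel \<rightarrow>\<^sub>M borel \<Otimes>\<^sub>M borel"
    using g by measurable
  from measurable_sets[OF this[unfolded borel_prod] X]
  show sets: "?T -` X \<in> sets borel"
    by simp
  have sets_pair: "sets (lborel \<Otimes>\<^sub>M lborel) = sets (borel :: ('a \<times> 'b) measure)"
    by (simp only: lborel_prod sets_lborel)
  have slice: "Pair x -` X \<in> sets borel" for x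
    using measurable_sets[OF _ X, of "Pair x" borel] by simp
  have slice_shift: "Pair x -` (?T -` X) = (\<lambda>y. y + g x) -` (Pair x -` X)" for x
    by auto
  have "emeasure (lborel \<Otimes>\<^sub>M lborel) (?T -` X)
      = (\<integral>\<^sup>+x. emeasure lborel (Pair x -` (?T -` X)) \<partial>lborel)"
    using sets by (intro lborel.emeasure_pair_measure_alt) (simp only: sets_pair)
  also have "\<dots> = (\<integral>\<^sup>+x. emeasure lborel (Pair x -` X) \<partial>lborel)"
    by (simp only: slice_shift emeasure_lborel_translation_vimage[OF slice])
  also have "\<dots> = emeasure (lborel \<Otimes>\<^sub>M lborel) X"
    using X by (intro lborel.emeasure_pair_measure_alt[symmetric]) (simp only: sets_pair)
  finally show "emeasure lborel (?T -` X) = emeasure lborel X"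
    by (simp only: lborel_prod)
qed

lemma norm_le_sqrt_card_mult:
  fixes x :: "real ^ 'n"
  assumes "\<And>i. \<bar>x $ i\<bar> \<le> r"
  shows "norm x \<le> sqrt CARD('n) * r"
proof -
  have "norm x = L2_set (\<lambda>i. \<bar>x $ i\<bar>) UNIV"
    by (simp add: norm_vec_def L2_set_def)
  also have "\<dots> \<le> L2_set (\<lambda>_. r) (UNIV :: 'n set)"
    using assms by (intro L2_set_mono) auto
  also have "\<dots> = sqrt CARD('n) * r"
    using assms[of undefined] by (simp add: L2_set_constant)
  finally show ?thesis .
qed

lemma cbox_subset_cball_cart:
  fixes c :: "real ^ 'n"
  shows "cbox (c - r *\<^sub>R ones) (c + r *\<^sub>R ones) \<subseteq> cball c (sqrt CARD('n) * r)"
proof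
  fix x assume x: "x \<in> cbox (c - r *\<^sub>R ones) (c + r *\<^sub>R ones)"
  have "\<bar>(x - c) $ i\<bar> \<le> r" for i
    using x[unfolded mem_box_cart, rule_format, of i] by (simp add: ones_def abs_le_iff)
  then have "norm (x - c) \<le> sqrt CARD('n) * r"
    by (rule norm_le_sqrt_card_mult)
  then show "x \<in> cball c (sqrt CARD('n) * r)"
    by (simp add: dist_norm norm_minus_commute)
qed

lemma inner_matrix_vector_transpose:
  fixes A :: "real ^ 'n ^ 'm"
  shows "(A *v x) \<bullet> y = x \<bullet> (transpose A *v y)"
  by (metis dot_lmul_matrix vector_transpose_matrix)

lemma transpose_mult_isometry_cancel:
  fixes U :: "real ^ 'p ^ 'd"
  assumes "transpose U ** U = mat 1"
  shows "transpose U *v (U *v y) = y"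
  by (metis matrix_vector_mul_assoc assms matrix_vector_mul_lid)

lemma norm_matrix_vector_isometry:
  fixes U :: "real ^ 'p ^ 'd"
  assumes "transpose U ** U = mat 1"
  shows "norm (U *v y) = norm y"
  using inner_matrix_vector_transpose[of U y "U *v y"]
  by (simp add: norm_eq_sqrt_inner transpose_mult_isometry_cancel[OF assms] del: transpose_matrix_vector)

lemma norm_power2_isometry_split:
  fixes U :: "real ^ 'p ^ 'd"
  assumes "transpose U ** U = mat 1"
  shows "(norm (w - U *v (transpose U *v w) + U *v v))\<^sup>2
       = (norm (w - U *v (transpose U *v w)))\<^sup>2 + (norm v)\<^sup>2"
proof -
  have "(U *v v) \<bullet> (w - U *v (transpose U *v w)) = v \<bullet> (transpose U *v w) - v \<bullet> (transpose U *v w)"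
    by (simp add: inner_matrix_vector_transpose inner_diff_right transpose_mult_isometry_cancel[OF assms]
        del: transpose_matrix_vector)
  then have "orthogonal (w - U *v (transpose U *v w)) (U *v v)"
    by (simp add: orthogonal_def inner_commute)
  then show ?thesis
    by (simp add: norm_add_Pythagorean norm_matrix_vector_isometry[OF assms])
qed

lemma norm_transpose_isometry_le:
  fixes U :: "real ^ 'p ^ 'd"
  assumes "transpose U ** U = mat 1"
  shows "norm (transpose U *v w) \<le> norm w"
  using norm_power2_isometry_split[OF assms, of w "transpose U *v w"]
  by (simp add: power2_le_imp_le)

text \<open>Fubini over the orthogonal complement of the range of \<open>U\<close> is not available, since that
  complement is not a type; the following map of \<open>\<real>\<^sup>d \<times> \<real>\<^sup>p\<close> replaces it.\<close>

definition slab_shear :: "real ^ 'p ^ 'd \<Rightarrow> real ^ 'd \<Rightarrow> (real ^ 'd) \<times> (real ^ 'p) \<Rightarrow> (real ^ 'd) \<times> (real ^ 'p)"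
  where "slab_shear U z = (\<lambda>(x, y).
    (x - U *v (transpose U *v x) + z + U *v (y - transpose U *v z), - (transpose U *v x)))"

lemma slab_shear_eq_shears:
  fixes U :: "real ^ 'p ^ 'd"
  assumes "transpose U ** U = mat 1"
  shows "slab_shear U z = (\<lambda>(x, y). (x + U *v y, y))
    \<circ> (\<lambda>(x, y). (x, y + - (transpose U *v x)))
    \<circ> (\<lambda>(x, y). (x + (z + U *v y - U *v (transpose U *v z)), y))"
  by (auto simp: slab_shear_def fun_eq_iff matrix_vector_right_distrib matrix_vector_mult_diff_distrib
      linear_neg[OF matrix_vector_mul_linear] transpose_mult_isometry_cancel[OF assms]
      simp del: transpose_matrix_vector)

lemma
  fixes U :: "real ^ 'p ^ 'd"
  assumes U: "transpose U ** U = mat 1" and X: "X \<in> sets borel"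
  shows sets_vimage_slab_shear: "slab_shear U z -` X \<in> sets borel"
    and emeasure_lborel_vimage_slab_shear: "emeasure lborel (slab_shear U z -` X) = emeasure lborel X"
proof -
  have linear_measurable: "(\<lambda>y. A *v y) \<in> borel_measurable borel" for A :: "real ^ 'm ^ 'n"
    by (intro borel_measurable_continuous_onI continuous_intros)
  have shift: "(\<lambda>y. z + U *v y - U *v (transpose U *v z)) \<in> borel_measurable borel"
    by (intro borel_measurable_continuous_onI continuous_intros)
  have proj: "(\<lambda>x. - (transpose U *v x)) \<in> borel_measurable borel"
    by (intro borel_measurable_continuous_onI continuous_intros)
  note shears = sets_shear_fst emeasure_lborel_shear_fst sets_shear_snd emeasure_lborel_shear_snd
  show "slab_shear U z -` X \<in> sets borel"
    unfolding slab_shear_eq_shears[OF U] vimage_comp[symmetric]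
    by (intro shears linear_measurable shift proj X)
  show "emeasure lborel (slab_shear U z -` X) = emeasure lborel X"
    unfolding slab_shear_eq_shears[OF U] vimage_comp[symmetric]
    by (simp only: shears linear_measurable shift proj X)
qed

lemma slab_shear_image_subset:
  fixes U :: "real ^ 'p ^ 'd"
  assumes U: "transpose U ** U = mat 1" and B: "B \<subseteq> cball (transpose U *v z) r"
  shows "slab_shear U z ` (cball 0 r \<times> B) \<subseteq> (cball z (2 * r) \<inter> (\<lambda>x. transpose U *v x) -` B) \<times> cball 0 r"
proof -
  have "slab_shear U z (x, y) \<in> (cball z (2 * r) \<inter> (\<lambda>x. transpose U *v x) -` B) \<times> cball 0 r"
    if x: "x \<in> cball 0 r" and y: "y \<in> B" for x y
  proof -
    define w where "w = x - U *v (transpose U *v x)"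
    define u where "u = transpose U *v z"
    define v where "v = w + U *v (y - u)"
    have shear: "slab_shear U z (x, y) = (z + v, - (transpose U *v x))"
      by (simp add: slab_shear_def v_def w_def u_def algebra_simps)
    have proj: "transpose U *v (z + v) = y"
      by (simp add: v_def w_def u_def matrix_vector_right_distrib matrix_vector_mult_diff_distrib
          transpose_mult_isometry_cancel[OF U] del: transpose_matrix_vector)
    have nx: "norm x \<le> r"
      using x by simp
    have ny: "norm (y - u) \<le> r"
      using y B by (auto simp: u_def dist_norm norm_minus_commute)
    have "(norm w)\<^sup>2 \<le> (norm x)\<^sup>2"
      using norm_power2_isometry_split[OF U, of x "transpose U *v x"] by (simp add: w_def)
    then have nw: "norm w \<le> norm x"
      by (rule power2_le_imp_le) simp
    have "(norm v)\<^sup>2 = (norm w)\<^sup>2 + (norm (y - u))\<^sup>2"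
      unfolding v_def w_def by (rule norm_power2_isometry_split[OF U])
    also have "\<dots> \<le> r\<^sup>2 + r\<^sup>2"
      using nw nx ny by (intro add_mono power_mono) auto
    also have "\<dots> \<le> (2 * r)\<^sup>2"
      using zero_le_power2[of r] by (simp add: power_mult_distrib)
    finally have "norm v \<le> 2 * r"
      by (rule power2_le_imp_le) (use nx norm_ge_zero[of x] in linarith)
    moreover have "norm (transpose U *v x) \<le> r"
      using nx norm_transpose_isometry_le[OF U, of x] by simp
    ultimately show ?thesis
      using y by (simp add: shear proj dist_norm del: transpose_matrix_vector)
  qed
  then show ?thesis
    by blast
qed

lemma measure_slab_lower_bound:
  fixes U :: "real ^ 'p ^ 'd" and B :: "(real ^ 'p) set"
  assumes U: "transpose U ** U = mat 1"
    and B: "B \<in> sets borel" "B \<subseteq> cball (transpose U *v z) r"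
  shows "measure lborel (cball (0 :: real ^ 'd) r) * measure lborel B
    \<le> measure lborel (cball z (2 * r) \<inter> (\<lambda>x. transpose U *v x) -` B) * measure lborel (cball (0 :: real ^ 'p) r)"
proof -
  define S where "S = cball z (2 * r) \<inter> (\<lambda>x. transpose U *v x) -` B"
  have "(\<lambda>x. transpose U *v x) \<in> borel_measurable borel"
    by (intro borel_measurable_continuous_onI continuous_intros)
  from measurable_sets[OF this B(1)] have S: "S \<in> sets borel"
    by (simp add: S_def del: transpose_matrix_vector)
  have "S \<times> cball (0 :: real ^ 'p) r \<in> sets (borel \<Otimes>\<^sub>M borel)"
    using S by (intro pair_measureI) auto
  then have SC: "S \<times> cball (0 :: real ^ 'p) r \<in> sets borel"
    unfolding borel_prod .
  have "emeasure lborel (cball (0 :: real ^ 'd) r) * emeasure lborel B = emeasure lborel (cball (0 :: real ^ 'd) r \<times> B)"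
    using B by (simp add: emeasure_lborel_Times)
  also have "\<dots> \<le> emeasure lborel (slab_shear U z -` (S \<times> cball 0 r))"
  proof (rule emeasure_mono)
    show "cball 0 r \<times> B \<subseteq> slab_shear U z -` (S \<times> cball 0 r)"
      using slab_shear_image_subset[OF U B(2)] unfolding S_def image_subset_iff_subset_vimage .
  qed (simp add: sets_vimage_slab_shear[OF U SC])
  also have "\<dots> = emeasure lborel S * emeasure lborel (cball (0 :: real ^ 'p) r)"
    using S SC by (simp add: emeasure_lborel_vimage_slab_shear[OF U] emeasure_lborel_Times)
  finally have le: "emeasure lborel (cball (0 :: real ^ 'd) r) * emeasure lborel B
      \<le> emeasure lborel S * emeasure lborel (cball (0 :: real ^ 'p) r)" .
  have bounded: "bounded S"
    by (simp add: S_def bounded_Int)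
  have "emeasure lborel S * emeasure lborel (cball (0 :: real ^ 'p) r) < \<top>"
    using emeasure_bounded_finite[OF bounded] emeasure_lborel_cball_finite[of "0 :: real ^ 'p" r] by (simp add: ennreal_mult_less_top)
  from enn2real_mono[OF le this] show ?thesis
    unfolding enn2real_mult S_def by (simp only: measure_def)
qed

definition to_unit_cube :: "real ^ 'n \<Rightarrow> real ^ 'n"
  where "to_unit_cube b = (1/2) *\<^sub>R (b + ones)"

lemma vimage_to_unit_cube_cbox: "to_unit_cube -` cbox (to_unit_cube l) (to_unit_cube r) = cbox l r"
  by (auto simp: mem_box_cart to_unit_cube_def ones_def)

lemma to_unit_cube_cbox_subset:
  assumes "\<And>i. -1 \<le> l $ i" and "\<And>i. r $ i \<le> 1"
  shows "cbox (to_unit_cube l) (to_unit_cube r) \<subseteq> cbox 0 ones"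
proof
  fix x assume x: "x \<in> cbox (to_unit_cube l) (to_unit_cube r)"
  have "0 \<le> x $ i \<and> x $ i \<le> 1" for i
    using x[unfolded mem_box_cart, rule_format, of i] assms[of i] by (simp add: to_unit_cube_def ones_def)
  then show "x \<in> cbox 0 ones"
    by (simp add: mem_box_cart ones_def)
qed

lemma measure_lborel_vimage_to_unit_cube:
  fixes A :: "(real ^ 'n) set"
  assumes A: "A \<in> sets borel"
  shows "measure lborel A = (1/2) ^ CARD('n) * measure lborel (to_unit_cube -` A)"
proof -
  have "to_unit_cube \<in> borel_measurable borel"
    unfolding to_unit_cube_def by (intro borel_measurable_continuous_onI continuous_intros)
  from measurable_sets[OF this A] have V: "to_unit_cube -` A \<in> sets borel"
    by simp
  have "surj (to_unit_cube :: real ^ 'n \<Rightarrow> real ^ 'n)"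
    by (rule surjI[of _ "\<lambda>a. 2 *\<^sub>R a - ones"]) (simp add: to_unit_cube_def algebra_simps)
  then have "A = (\<lambda>b. (1/2) *\<^sub>R b + (1/2) *\<^sub>R ones) ` (to_unit_cube -` A)"
    by (simp add: surj_image_vimage_eq to_unit_cube_def[abs_def] scaleR_add_right)
  then have "measure lebesgue A = (1/2) ^ CARD('n) * measure lebesgue (to_unit_cube -` A)"
    using measure_lebesgue_affine[of "1/2" "(1/2) *\<^sub>R ones" "to_unit_cube -` A"] by simp
  then show ?thesis
    using A V by simp
qed

lemma measure_distr_projection_lower_bound:
  fixes M :: "(real ^ 'd) measure" and U :: "real ^ 'p ^ 'd"
  assumes M: "finite_measure M" "sets M = sets borel"
    and U: "transpose U ** U = mat 1"
    and density: "\<And>A. A \<in> sets borel \<Longrightarrow> A \<subseteq> cball z (2 * r) \<Longrightarrow> c * measure lborel A \<le> measure M A"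
    and c: "0 \<le> c" and r: "0 < r"
    and A: "A \<in> sets borel" "to_unit_cube -` A \<subseteq> cball (transpose U *v z) r"
  shows "c * 2 ^ CARD('p) * measure lborel (cball (0 :: real ^ 'd) r) / measure lborel (cball (0 :: real ^ 'p) r)
      * measure lborel A \<le> measure (distr M borel (\<lambda>x. to_unit_cube (transpose U *v x))) A"
proof -
  define B where "B = to_unit_cube -` A"
  define F where "F = (\<lambda>x. to_unit_cube (transpose U *v x))"
  define S where "S = cball z (2 * r) \<inter> (\<lambda>x. transpose U *v x) -` B"
  have "to_unit_cube \<in> borel_measurable borel"
    unfolding to_unit_cube_def by (intro borel_measurable_continuous_onI continuous_intros)
  from measurable_sets[OF this A(1)] have B: "B \<in> sets borel"
    by (simp add: B_def)
  have F: "F \<in> borel_measurable borel"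
    unfolding F_def to_unit_cube_def by (intro borel_measurable_continuous_onI continuous_intros)
  then have FM: "F \<in> M \<rightarrow>\<^sub>M borel"
    using measurable_cong_sets[OF M(2) refl] by blast
  have S_eq: "S = cball z (2 * r) \<inter> (F -` A \<inter> space borel)"
    by (auto simp: S_def B_def F_def)
  from measurable_sets[OF F A(1)] have S: "S \<in> sets borel"
    unfolding S_eq by simp
  have S_subset: "S \<subseteq> F -` A \<inter> space M"
    using sets_eq_imp_space_eq[OF M(2)] by (auto simp: S_eq)
  have ball_pos: "0 < measure lborel (cball (0 :: real ^ 'p) r)"
    using r by simp
  then have "c * 2 ^ CARD('p) * measure lborel (cball (0 :: real ^ 'd) r) / measure lborel (cball (0 :: real ^ 'p) r)
      * measure lborel A = c * (measure lborel (cball (0 :: real ^ 'd) r) * measure lborel B / measure lborel (cball (0 :: real ^ 'p) r))"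
    by (simp add: measure_lborel_vimage_to_unit_cube[OF A(1)] B_def power_one_over field_simps)
  also have "\<dots> \<le> c * measure lborel S"
    using measure_slab_lower_bound[OF U B A(2)[folded B_def]] ball_pos c
    by (intro mult_left_mono) (simp_all add: S_def divide_le_eq)
  also have "\<dots> \<le> measure M S"
    using density[OF S] by (simp add: S_def)
  also have "\<dots> \<le> measure M (F -` A \<inter> space M)"
    using finite_measure.finite_measure_mono[OF M(1) S_subset measurable_sets[OF FM A(1)]] .
  also have "\<dots> = measure (distr M borel F) A"
    using FM A(1) by (simp add: measure_distr)
  finally show ?thesis
    by (simp add: F_def)
qed

lemma unit_cube_density_of_projection:
  fixes M :: "(real ^ 'd) measure" and U :: "real ^ 'p ^ 'd"
  assumes M: "finite_measure M" "sets M = sets borel"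
    and ball: "cball z tau \<subseteq> cball 0 1"
    and density: "\<And>A. A \<in> sets borel \<Longrightarrow> A \<subseteq> cball z tau \<Longrightarrow> c * measure lborel A \<le> measure M A"
    and U: "transpose U ** U = mat 1" and c: "0 \<le> c" and tau: "0 < tau"
  defines "s \<equiv> tau / (2 * sqrt CARD('p))"
  shows "\<exists>a. cbox a (a + s *\<^sub>R ones) \<subseteq> cbox 0 ones \<and>
    (\<forall>A \<in> sets borel. A \<subseteq> cbox a (a + s *\<^sub>R ones) \<longrightarrow>
      c * 2 ^ CARD('p) * measure lborel (cball (0 :: real ^ 'd) (tau / 2))
        / measure lborel (cball (0 :: real ^ 'p) (tau / 2)) * measure lborel A
      \<le> measure (distr M borel (\<lambda>x. to_unit_cube (transpose U *v x))) A)"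
proof -
  define u where "u = transpose U *v z"
  define a where "a = to_unit_cube (u - s *\<^sub>R ones)"
  have "norm u + tau \<le> 1"
    using norm_transpose_isometry_le[OF U, of z] ball tau by (simp add: u_def cball_subset_cball_iff dist_norm)
  then have u: "-1 \<le> u $ i - tau" "u $ i + tau \<le> 1" for i
    using component_le_norm_cart[of u i] abs_ge_self[of "u $ i"] abs_ge_minus_self[of "u $ i"]
    by linarith+
  have "1 \<le> sqrt CARD('p)"
    by simp
  then have "s \<le> tau / 2"
    unfolding s_def using tau by (intro divide_left_mono) auto
  then have s: "0 < s" "s \<le> tau" "sqrt CARD('p) * s = tau / 2"
    using tau by (simp_all add: s_def)
  have corner: "a + s *\<^sub>R ones = to_unit_cube (u + s *\<^sub>R ones)"
    by (simp add: a_def to_unit_cube_def vec_eq_iff ones_def field_simps)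
  have cube: "cbox a (a + s *\<^sub>R ones) \<subseteq> cbox 0 ones"
    unfolding corner unfolding a_def
  proof (rule to_unit_cube_cbox_subset)
    show "-1 \<le> (u - s *\<^sub>R ones) $ i" "(u + s *\<^sub>R ones) $ i \<le> 1" for i
      using u[of i] \<open>s \<le> tau\<close> by (simp_all add: ones_def)
  qed
  have vimage: "to_unit_cube -` cbox a (a + s *\<^sub>R ones) \<subseteq> cball u (tau / 2)"
    using cbox_subset_cball_cart[of u s] s unfolding corner unfolding a_def vimage_to_unit_cube_cbox by simp
  show ?thesis
  proof (intro exI[of _ a] conjI ballI impI)
    fix A assume "A \<in> sets borel" "A \<subseteq> cbox a (a + s *\<^sub>R ones)"
    with vimage density tau show "c * 2 ^ CARD('p) * measure lborel (cball (0 :: real ^ 'd) (tau / 2))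
        / measure lborel (cball (0 :: real ^ 'p) (tau / 2)) * measure lborel A
      \<le> measure (distr M borel (\<lambda>x. to_unit_cube (transpose U *v x))) A"
      by (intro measure_distr_projection_lower_bound[OF M U _ c]) (auto simp: u_def)
  qed (rule cube)
qed

theorem lemma17:
  fixes c0 tau :: real
  assumes "c0 > 0" and "tau > 0"
    and "CARD('p::finite) \<le> CARD('d::finite)"
  shows "\<exists>c0'>0. \<forall>(M :: (real ^ 'd) measure) (U :: real ^ 'p ^ 'd) (z :: real ^ 'd).
     (prob_space M \<and> sets M = sets borel \<and> measure M (cball 0 1) = 1
      \<and> cball z tau \<subseteq> cball 0 1
      \<and> (\<forall>A0 \<in> sets borel. A0 \<subseteq> cball z tau \<longrightarrow> measure M A0 \<ge> c0 * measure lborel A0)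
      \<and> transpose U ** U = mat 1)
     \<longrightarrow> (\<exists>a :: real ^ 'p.
           cbox a (a + (tau / (2 * sqrt (real CARD('p)))) *\<^sub>R ones) \<subseteq> cbox 0 ones
         \<and> (\<forall>A0 \<in> sets borel. A0 \<subseteq> cbox a (a + (tau / (2 * sqrt (real CARD('p)))) *\<^sub>R ones) \<longrightarrow>
              measure (distr M borel (\<lambda>x. (1/2) *\<^sub>R (transpose U *v x + ones))) A0
                \<ge> c0' * measure lborel A0))"
proof -
  define c' where "c' = c0 * 2 ^ CARD('p) * measure lborel (cball (0 :: real ^ 'd) (tau / 2))
    / measure lborel (cball (0 :: real ^ 'p) (tau / 2))"
  show ?thesis
  proof (intro exI[of _ c'] conjI allI impI)
    show "0 < c'"
      using assms by (simp add: c'_def)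
  qed (elim conjE, unfold c'_def, rule unit_cube_density_of_projection[unfolded to_unit_cube_def];
      use assms in \<open>auto simp: prob_space.finite_measure\<close>)
qed

end
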